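(* Let $W$ be an $n\times n$ matrix with $\pm1$ entries. Assume that there exists a sequence $0\le j(1),\ldots,j(n)\le n$ such that $W_{ij}=-1$ if $j\le j(i)$ and $W_{ij}=1$ if $j>j(i)$. Then $W$ is $O(\log(n))$-decomposable.
   Context: For an $n\times m$ matrix $W$, $\mathrm{sym}(W)=\begin{bmatrix}0 & W\\ W^T & 0\end{bmatrix}$; $W$ is $\beta$-decomposable if there exist positive semi-definite matrices $P,N$ with $\mathrm{sym}(W)=P-N$ and $P_{ii},N_{ii}\le\beta$ for all $i$. This generalizes the known fact (Hazan, Kale, Shalev-Shwartz) that the $n\times n$ matrix with $1$ on and above the diagonal and $-1$ below it is $O(\log n)$-decomposable. *)

theory Defs
  imports "Jordan_Normal_Form.Matrix"
begin

definition psd_mat :: "real mat \<Rightarrow> bool" where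
  "psd_mat P \<longleftrightarrow> dim_row P = dim_col P \<and> transpose_mat P = P \<and>
     (\<forall>v \<in> carrier_vec (dim_row P). v \<bullet> (P *\<^sub>v v) \<ge> 0)"

definition sym_mat :: "real mat \<Rightarrow> real mat" where
  "sym_mat W = four_block_mat (0\<^sub>m (dim_row W) (dim_row W)) W
                              (transpose_mat W) (0\<^sub>m (dim_col W) (dim_col W))"

definition decomposable :: "real \<Rightarrow> real mat \<Rightarrow> bool" where
  "decomposable \<beta> W \<longleftrightarrow>
     (\<exists>P N. psd_mat P \<and> psd_mat N \<and>
        dim_row P = dim_row W + dim_col W \<and> dim_row N = dim_row W + dim_col W \<and>
        sym_mat W = P - N \<and>
        (\<forall>i < dim_row W + dim_col W. P $$ (i,i) \<le> \<beta> \<and> N $$ (i,i) \<le> \<beta>))"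

end

theory Submission
  imports Defs "HOL-Library.Discrete_Functions"
begin

text \<open>
  Write \<open>W = 1 - 2E\<close> with \<open>E\<^sub>i\<^sub>j = [j < t i]\<close>. For numbers below \<open>2\<^sup>L\<close>, \<open>j < a\<close> holds iff there is exactly one
  bit \<open>b < L\<close> at which \<open>a\<close> and \<open>j\<close> agree on all higher bits while \<open>a\<close> has a 1 and \<open>j\<close> a 0.
  Hence \<open>E\<close> is a sum, over bits \<open>b\<close> and prefixes \<open>p\<close>, of 0/1 outer products \<open>u v\<^sup>T\<close>, where for
  a fixed bit every row (column) index lies in the support of only one \<open>u\<close> (\<open>v\<close>). This gives
  \<open>W = G H\<^sup>T\<close> with rows of squared norm \<open>O(L)\<close>, and any such factorization decomposes
  \<open>sym W = (F F\<^sup>T - F' F'\<^sup>T) / 2\<close> with \<open>F = [G; H]\<close>, \<open>F' = [G; -H]\<close>.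
\<close>

lemma psd_mat_gram:
  fixes f :: "'k \<Rightarrow> nat \<Rightarrow> real"
  assumes "c \<ge> 0"
  shows "psd_mat (mat d d (\<lambda>(x,y). c * (\<Sum>k\<in>S. f k x * f k y)))"
proof -
  let ?P = "mat d d (\<lambda>(x,y). c * (\<Sum>k\<in>S. f k x * f k y))"
  have "v \<bullet> (?P *\<^sub>v v) = (\<Sum>k\<in>S. c * (\<Sum>x<d. f k x * v$x)^2)" if "v \<in> carrier_vec d" for v
  proof -
    have "v \<bullet> (?P *\<^sub>v v) = (\<Sum>x<d. \<Sum>y<d. \<Sum>k\<in>S. c * ((f k x * v$x) * (f k y * v$y)))"
      using that by (auto simp: scalar_prod_def mult_mat_vec_def row_def atLeast0LessThan
          sum_distrib_left sum_distrib_right mult_ac intro!: sum.cong)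
    also have "\<dots> = (\<Sum>k\<in>S. \<Sum>x<d. \<Sum>y<d. c * ((f k x * v$x) * (f k y * v$y)))"
      by (simp add: sum.swap[of _ "{..<d}" S])
    also have "\<dots> = (\<Sum>k\<in>S. c * (\<Sum>x<d. f k x * v$x)^2)"
      by (simp add: power2_eq_square sum_distrib_left sum_distrib_right mult_ac)
    finally show ?thesis .
  qed
  then show ?thesis
    using assms unfolding psd_mat_def
    by (auto intro!: eq_matI sum_nonneg simp: mult.commute)
qed

lemma decomposable_if_factorization:
  fixes g h :: "'k \<Rightarrow> nat \<Rightarrow> real"
  assumes W: "W \<in> carrier_mat n m"
    and factor: "\<And>i j. i < n \<Longrightarrow> j < m \<Longrightarrow> W $$ (i,j) = (\<Sum>k\<in>S. g k i * h k j)"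
    and g_bound: "\<And>i. i < n \<Longrightarrow> (\<Sum>k\<in>S. (g k i)^2) \<le> 2 * \<beta>"
    and h_bound: "\<And>j. j < m \<Longrightarrow> (\<Sum>k\<in>S. (h k j)^2) \<le> 2 * \<beta>"
  shows "decomposable \<beta> W"
proof -
  define F where "F k x = (if x < n then g k x else h k (x - n))" for k x
  define G where "G k x = (if x < n then g k x else - h k (x - n))" for k x
  define P where "P = mat (n + m) (n + m) (\<lambda>(x,y). 1/2 * (\<Sum>k\<in>S. F k x * F k y))"
  define N where "N = mat (n + m) (n + m) (\<lambda>(x,y). 1/2 * (\<Sum>k\<in>S. G k x * G k y))"
  have dims: "dim_row W = n" "dim_col W = m"
    using W by auto
  have "sym_mat W $$ (x,y) = 1/2 * (\<Sum>k\<in>S. F k x * F k y - G k x * G k y)"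
    if "x < n + m" "y < n + m" for x y
    using that factor[of x "y - n"] factor[of y "x - n"]
    by (auto simp: sym_mat_def dims F_def G_def sum_distrib_left mult.commute)
  then have "sym_mat W = P - N"
    by (intro eq_matI) (auto simp: sym_mat_def dims P_def N_def sum_subtractf algebra_simps)
  moreover have "P $$ (x,x) \<le> \<beta> \<and> N $$ (x,x) \<le> \<beta>" if "x < n + m" for x
    using that g_bound[of x] h_bound[of "x - n"]
    by (cases "x < n") (auto simp: P_def N_def F_def G_def power2_eq_square mult.commute)
  moreover have "psd_mat P" "psd_mat N"
    unfolding P_def N_def by (rule psd_mat_gram, simp)+
  ultimately show ?thesis
    unfolding decomposable_def by (intro exI[of _ P] exI[of _ N]) (auto simp: dims P_def N_def)
qed

definition less_at_bit :: "nat \<Rightarrow> nat \<Rightarrow> nat \<Rightarrow> bool" where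
  "less_at_bit b j a \<longleftrightarrow>
     a div 2 ^ Suc b = j div 2 ^ Suc b \<and> odd (a div 2 ^ b) \<and> even (j div 2 ^ b)"

lemma less_at_bit_0: "less_at_bit 0 j a \<longleftrightarrow> a div 2 = j div 2 \<and> odd a \<and> even j"
  by (simp add: less_at_bit_def)

lemma less_at_bit_Suc: "less_at_bit (Suc b) j a \<longleftrightarrow> less_at_bit b (j div 2) (a div 2)"
proof -
  have "x div 2 ^ Suc c = x div 2 div 2 ^ c" for x c :: nat
    by (simp add: div_mult2_eq)
  then show ?thesis
    unfolding less_at_bit_def by presburger
qed

lemma less_iff_half_less_or_less_at_bit_0:
  fixes a j :: nat
  shows "j < a \<longleftrightarrow> j div 2 < a div 2 \<or> less_at_bit 0 j a"
  unfolding less_at_bit_0 by presburger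

lemma of_bool_less_eq_sum_less_at_bit:
  fixes a j :: nat
  assumes "a < 2 ^ K" "j < 2 ^ K"
  shows "of_bool (j < a) = (\<Sum>b<K. of_bool (less_at_bit b j a) :: 'a :: semiring_1)"
  using assms
proof (induction K arbitrary: a j)
  case (Suc K)
  have "(\<Sum>b<Suc K. of_bool (less_at_bit b j a) :: 'a) =
      of_bool (less_at_bit 0 j a) + (\<Sum>b<K. of_bool (less_at_bit b (j div 2) (a div 2)))"
    by (simp only: sum.lessThan_Suc_shift less_at_bit_Suc)
  also have "\<dots> = of_bool (less_at_bit 0 j a) + of_bool (j div 2 < a div 2)"
    using Suc by simp
  also have "\<dots> = of_bool (j < a)"
    using less_iff_half_less_or_less_at_bit_0[of j a] by (auto simp: less_at_bit_0)
  finally show ?case ..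
qed simp

lemma sum_lessThan_of_bool_eq:
  fixes a M :: nat
  assumes "a < M"
  shows "(\<Sum>p<M. of_bool (p = a \<and> Q) :: 'a :: semiring_1) = of_bool Q"
proof -
  have "(\<Sum>p<M. of_bool (p = a \<and> Q) :: 'a) = (\<Sum>p<M. if p = a then of_bool Q else 0)"
    by (intro sum.cong) auto
  also have "\<dots> = of_bool Q"
    using assms by (subst sum.delta) auto
  finally show ?thesis .
qed

lemma decomposable_threshold_mat:
  fixes W :: "real mat" and t :: "nat \<Rightarrow> nat"
  assumes W: "W \<in> carrier_mat n m" and m: "m \<le> 2 ^ L" and t: "\<And>i. i < n \<Longrightarrow> t i < 2 ^ L"
    and entries: "\<And>i j. i < n \<Longrightarrow> j < m \<Longrightarrow> W $$ (i,j) = (if j < t i then -1 else 1)"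
  shows "decomposable (2 * L + 1) W"
proof -
  \<comment> \<open>\<open>None\<close> indexes the all-ones term, \<open>Some (b, p)\<close> the bit-\<open>b\<close> term for the prefix \<open>p\<close>\<close>
  define S :: "(nat \<times> nat) option set" where "S = insert None (Some ` ({..<L} \<times> {..<2 ^ L}))"
  define g :: "(nat \<times> nat) option \<Rightarrow> nat \<Rightarrow> real" where
    "g k i = (case k of None \<Rightarrow> 1
       | Some (b, p) \<Rightarrow> - 2 * of_bool (p = t i div 2 ^ Suc b \<and> odd (t i div 2 ^ b)))" for k i
  define h :: "(nat \<times> nat) option \<Rightarrow> nat \<Rightarrow> real" where
    "h k j = (case k of None \<Rightarrow> 1
       | Some (b, p) \<Rightarrow> of_bool (p = j div 2 ^ Suc b \<and> even (j div 2 ^ b)))" for k j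
  have sum_S: "(\<Sum>k\<in>S. f k) = f None + (\<Sum>b<L. \<Sum>p<2 ^ L. f (Some (b, p)))"
    for f :: "(nat \<times> nat) option \<Rightarrow> real"
    by (simp add: S_def sum.reindex sum.cartesian_product)
  have prefix_less: "x div 2 ^ c < 2 ^ L" if "x < 2 ^ L" for x c :: nat
    using that div_le_dividend le_less_trans by blast
  have "W $$ (i,j) = (\<Sum>k\<in>S. g k i * h k j)" if "i < n" "j < m" for i j
  proof -
    have "(\<Sum>p<2 ^ L. g (Some (b, p)) i * h (Some (b, p)) j) = - 2 * of_bool (less_at_bit b j (t i))"
      for b
    proof -
      have "g (Some (b, p)) i * h (Some (b, p)) j =
          - 2 * of_bool (p = t i div 2 ^ Suc b \<and> less_at_bit b j (t i))" for p
        by (auto simp: g_def h_def less_at_bit_def)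
      then have "(\<Sum>p<2 ^ L. g (Some (b, p)) i * h (Some (b, p)) j) =
          - 2 * (\<Sum>p<2 ^ L. of_bool (p = t i div 2 ^ Suc b \<and> less_at_bit b j (t i)))"
        by (simp only: sum_distrib_left)
      then show ?thesis
        using prefix_less t[OF \<open>i < n\<close>] by (simp only: sum_lessThan_of_bool_eq)
    qed
    then have "(\<Sum>k\<in>S. g k i * h k j) = 1 + (\<Sum>b<L. - 2 * of_bool (less_at_bit b j (t i)))"
      by (simp only: sum_S) (simp add: g_def h_def)
    also have "\<dots> = 1 - 2 * of_bool (j < t i)"
      using that m by (simp only: sum_distrib_left[symmetric] of_bool_less_eq_sum_less_at_bit[OF t])
    also have "\<dots> = W $$ (i,j)"
      using entries that by simp
    finally show ?thesis ..
  qed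
  moreover have "(\<Sum>k\<in>S. (g k i)^2) \<le> 2 * (2 * L + 1)" if "i < n" for i
  proof -
    have "(\<Sum>p<2 ^ L. (g (Some (b, p)) i)^2) \<le> 4" for b
    proof -
      have "(g (Some (b, p)) i)^2 = 4 * of_bool (p = t i div 2 ^ Suc b \<and> odd (t i div 2 ^ b))" for p
        by (simp add: g_def)
      then have "(\<Sum>p<2 ^ L. (g (Some (b, p)) i)^2) = 4 * of_bool (odd (t i div 2 ^ b))"
        using prefix_less t[OF that] by (simp only: sum_distrib_left[symmetric] sum_lessThan_of_bool_eq)
      then show ?thesis
        by simp
    qed
    then have "(\<Sum>b<L. \<Sum>p<2 ^ L. (g (Some (b, p)) i)^2) \<le> (\<Sum>b<L. 4)"
      by (intro sum_mono)
    then show ?thesis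
      by (simp add: sum_S g_def)
  qed
  moreover have "(\<Sum>k\<in>S. (h k j)^2) \<le> 2 * (2 * L + 1)" if "j < m" for j
  proof -
    have "(\<Sum>p<2 ^ L. (h (Some (b, p)) j)^2) \<le> 1" for b
    proof -
      have "(h (Some (b, p)) j)^2 = of_bool (p = j div 2 ^ Suc b \<and> even (j div 2 ^ b))" for p
        by (simp add: h_def)
      then have "(\<Sum>p<2 ^ L. (h (Some (b, p)) j)^2) = of_bool (even (j div 2 ^ b))"
        using prefix_less that m by (simp only: sum_lessThan_of_bool_eq)
      then show ?thesis
        by simp
    qed
    then have "(\<Sum>b<L. \<Sum>p<2 ^ L. (h (Some (b, p)) j)^2) \<le> (\<Sum>b<L. 1)"
      by (intro sum_mono)
    then show ?thesis
      by (simp add: sum_S h_def)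
  qed
  ultimately show ?thesis
    by (intro decomposable_if_factorization[OF W]) auto
qed

lemma decomposable_mono: "decomposable \<beta> W \<Longrightarrow> \<beta> \<le> \<beta>' \<Longrightarrow> decomposable \<beta>' W"
  unfolding decomposable_def by (meson order_trans)

lemma floor_log_le_log2: "n > 0 \<Longrightarrow> real (floor_log n) \<le> log 2 n"
  by (intro le_log2_of_power floor_log_exp2_le)

lemma Suc_floor_log_le_ln:
  assumes "n \<ge> 2"
  shows "2 * real (Suc (floor_log n)) + 1 \<le> 5 / ln 2 * ln n"
proof -
  have "1 \<le> log 2 n" "floor_log n \<le> log 2 n"
    using assms by (simp_all add: floor_log_le_log2)
  then have "2 * real (Suc (floor_log n)) + 1 \<le> 5 * log 2 n"
    unfolding of_nat_Suc by argo
  then show ?thesis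
    by (simp add: log_def)
qed

theorem proposition4:
  shows "\<exists>C::real. \<forall>(n::nat) (W::real mat) (jf::nat \<Rightarrow> nat).
     n \<ge> 2 \<and> W \<in> carrier_mat n n \<and>
     (\<forall>i<n. \<forall>j<n. W $$ (i,j) = 1 \<or> W $$ (i,j) = -1) \<and>
     (\<forall>i<n. jf i \<le> n) \<and>
     (\<forall>i<n. \<forall>j<n. (j < jf i \<longrightarrow> W $$ (i,j) = -1) \<and> (jf i \<le> j \<longrightarrow> W $$ (i,j) = 1))
     \<longrightarrow> decomposable (C * ln (real n)) W"
proof (intro exI[of _ "5 / ln 2"] allI impI, elim conjE)
  fix n :: nat and W :: "real mat" and jf :: "nat \<Rightarrow> nat"
  assume n: "n \<ge> 2" and W: "W \<in> carrier_mat n n" and jf: "\<forall>i<n. jf i \<le> n"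
    and entries: "\<forall>i<n. \<forall>j<n. (j < jf i \<longrightarrow> W $$ (i,j) = -1) \<and> (jf i \<le> j \<longrightarrow> W $$ (i,j) = 1)"
  define L where "L = Suc (floor_log n)"
  have "n < 2 ^ L"
    using floor_log_exp2_gt[of n] by (simp add: L_def)
  then have "decomposable (2 * L + 1) W"
  proof (rule decomposable_threshold_mat[OF W less_imp_le])
    show "jf i < 2 ^ L" if "i < n" for i
      using jf that \<open>n < 2 ^ L\<close> le_less_trans by blast
    show "W $$ (i,j) = (if j < jf i then -1 else 1)" if "i < n" "j < n" for i j
      using entries that by (simp add: not_less)
  qed
  moreover have "2 * L + 1 \<le> 5 / ln 2 * ln n"
    using Suc_floor_log_le_ln[OF n] by (simp add: L_def)
  ultimately show "decomposable (5 / ln 2 * ln n) W"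
    by (rule decomposable_mono)
qed

end
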